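(* Let $m\ge2$, let $K/F$ be a cyclic Galois field extension of degree $m$ with $\mathrm{Gal}(K/F)=\langle\sigma\rangle$, and suppose $F$ has no non-trivial $m$th root of unity. Let $A=(K/F,\sigma,d)$ be a nonassociative cyclic algebra of degree $m$ where $d\in K^\times$ is not contained in any proper subfield of $K$. Then every $F$-automorphism of $A$ restricts to the identity on $K$, and $\mathrm{Aut}_F(A)\cong\ker(N_{K/F})$. In particular, all automorphisms of $A$ are inner.
   Context: For $\sigma\in\mathrm{Aut}(K)$, $K[t;\sigma]$ is the twisted polynomial ring (polynomials $\sum a_it^i$, $a_i\in K$, with multiplication determined by $ta=\sigma(a)t$). For $d\in K^\times$, $(K/F,\sigma,d)$ is the $F$-vector space of polynomials of degree $<m$ in $K[t;\sigma]$ with multiplication $g\circ h=$ remainder of $gh$ on right division by $t^m-d$ (i.e. $gh=q(t^m-d)+r$ with $\deg r<m$); it is a unital nonassociative $F$-algebra containing $K$. An automorphism $G$ of a unital algebra $A$ is inner if there is $c\in A$ with a left inverse $c_l$ (i.e. $c_lc=1$) such that $G(x)=(c_lx)c$ for all $x\in A$. *)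

theory Defs
  imports "HOL-Algebra.Group" "HOL-Library.FuncSet"
begin

(* Subfields of the ambient field 'k (the field K is the type 'k itself). *)
definition is_subfield :: "'k::field set \<Rightarrow> bool" where
  "is_subfield L \<longleftrightarrow> 0 \<in> L \<and> 1 \<in> L \<and> (\<forall>x\<in>L. \<forall>y\<in>L. x + y \<in> L \<and> x * y \<in> L)
     \<and> (\<forall>x\<in>L. - x \<in> L) \<and> (\<forall>x\<in>L. x \<noteq> 0 \<longrightarrow> inverse x \<in> L)"

definition field_aut :: "('k::field \<Rightarrow> 'k) \<Rightarrow> bool" where
  "field_aut \<tau> \<longleftrightarrow> bij \<tau> \<and> (\<forall>x y. \<tau> (x + y) = \<tau> x + \<tau> y) \<and> (\<forall>x y. \<tau> (x * y) = \<tau> x * \<tau> y)"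

definition Gal :: "'k::field set \<Rightarrow> ('k \<Rightarrow> 'k) set" where
  "Gal F = {\<tau>. field_aut \<tau> \<and> (\<forall>a\<in>F. \<tau> a = a)}"

definition fixed_field :: "('k \<Rightarrow> 'k) set \<Rightarrow> 'k set" where
  "fixed_field H = {x. \<forall>\<tau>\<in>H. \<tau> x = x}"

definition normKF :: "('k::field \<Rightarrow> 'k) \<Rightarrow> nat \<Rightarrow> 'k \<Rightarrow> 'k" where
  "normKF \<sigma> m k = (\<Prod>i<m. (\<sigma> ^^ i) k)"

(* Twisted polynomial ring K[t;sigma]: polynomials sum a_i t^i as finitely
   supported coefficient functions nat => 'k *)
definition tpolys :: "(nat \<Rightarrow> 'k::zero) set" where
  "tpolys = {g. finite {i. g i \<noteq> 0}}"

(* product in K[t;sigma], determined by t a = sigma(a) t: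
   (a t^i)(b t^j) = a sigma^i(b) t^(i+j) *)
definition tmult :: "('k::comm_ring_1 \<Rightarrow> 'k) \<Rightarrow> (nat \<Rightarrow> 'k) \<Rightarrow> (nat \<Rightarrow> 'k) \<Rightarrow> nat \<Rightarrow> 'k" where
  "tmult \<sigma> g h n = (\<Sum>i\<le>n. g i * (\<sigma> ^^ i) (h (n - i)))"

definition tm_minus_d :: "nat \<Rightarrow> 'k::comm_ring_1 \<Rightarrow> nat \<Rightarrow> 'k" where
  "tm_minus_d m d = (\<lambda>i. (if i = m then 1 else 0) - (if i = 0 then d else 0))"

(* underlying set of (K/F,sigma,d): polynomials of degree < m *)
definition cyc_carrier :: "nat \<Rightarrow> (nat \<Rightarrow> 'k::zero) set" where
  "cyc_carrier m = {g. \<forall>i\<ge>m. g i = 0}"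

(* multiplication of (K/F,sigma,d): remainder of gh on right division by t^m - d *)
definition cyc_mult :: "('k::comm_ring_1 \<Rightarrow> 'k) \<Rightarrow> nat \<Rightarrow> 'k \<Rightarrow> (nat \<Rightarrow> 'k) \<Rightarrow> (nat \<Rightarrow> 'k) \<Rightarrow> nat \<Rightarrow> 'k" where
  "cyc_mult \<sigma> m d g h = (THE r. r \<in> cyc_carrier m \<and>
      (\<exists>q\<in>tpolys. tmult \<sigma> g h = (\<lambda>n. tmult \<sigma> q (tm_minus_d m d) n + r n)))"

(* embedding of K into the algebra (constant polynomials); unit is cconst 1 *)
definition cconst :: "'k::zero \<Rightarrow> nat \<Rightarrow> 'k" where
  "cconst k = (\<lambda>i. if i = 0 then k else 0)"

definition cyc_AutF :: "'k::field set \<Rightarrow> ('k \<Rightarrow> 'k) \<Rightarrow> nat \<Rightarrow> 'k \<Rightarrow> ((nat \<Rightarrow> 'k) \<Rightarrow> (nat \<Rightarrow> 'k)) set" where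
  "cyc_AutF F \<sigma> m d = {G. G \<in> extensional (cyc_carrier m) \<and> bij_betw G (cyc_carrier m) (cyc_carrier m)
      \<and> (\<forall>x\<in>cyc_carrier m. \<forall>y\<in>cyc_carrier m. G (\<lambda>i. x i + y i) = (\<lambda>i. G x i + G y i))
      \<and> (\<forall>c\<in>F. \<forall>x\<in>cyc_carrier m. G (\<lambda>i. c * x i) = (\<lambda>i. c * G x i))
      \<and> (\<forall>x\<in>cyc_carrier m. \<forall>y\<in>cyc_carrier m. G (cyc_mult \<sigma> m d x y) = cyc_mult \<sigma> m d (G x) (G y))}"

definition cyc_Aut_group :: "'k::field set \<Rightarrow> ('k \<Rightarrow> 'k) \<Rightarrow> nat \<Rightarrow> 'k \<Rightarrow> ((nat \<Rightarrow> 'k) \<Rightarrow> (nat \<Rightarrow> 'k)) monoid" where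
  "cyc_Aut_group F \<sigma> m d = \<lparr>carrier = cyc_AutF F \<sigma> m d,
      monoid.mult = (\<lambda>G H. compose (cyc_carrier m) G H), one = restrict id (cyc_carrier m)\<rparr>"

definition norm_kernel_group :: "('k::field \<Rightarrow> 'k) \<Rightarrow> nat \<Rightarrow> 'k monoid" where
  "norm_kernel_group \<sigma> m = \<lparr>carrier = {k. normKF \<sigma> m k = 1}, monoid.mult = (*), one = 1\<rparr>"

definition cyc_inner :: "('k::field \<Rightarrow> 'k) \<Rightarrow> nat \<Rightarrow> 'k \<Rightarrow> ((nat \<Rightarrow> 'k) \<Rightarrow> (nat \<Rightarrow> 'k)) \<Rightarrow> bool" where
  "cyc_inner \<sigma> m d G \<longleftrightarrow> (\<exists>c\<in>cyc_carrier m. \<exists>cl\<in>cyc_carrier m. cyc_mult \<sigma> m d cl c = cconst 1 \<and>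
      (\<forall>x\<in>cyc_carrier m. G x = cyc_mult \<sigma> m d (cyc_mult \<sigma> m d cl x) c))"

end

theory Submission
  imports Defs
begin

text \<open>An \<open>F\<close>-automorphism \<open>G\<close> of \<open>A = (K/F,\<sigma>,d)\<close> preserves the left nucleus, which is \<open>K\<close>
  because \<open>d\<close> generates \<open>K\<close> over \<open>F\<close> (so \<open>\<sigma>\<^sup>i(d) \<noteq> d\<close> for \<open>0 < i < m\<close>); hence \<open>G\<close> restricts to some
  \<open>\<tau> = \<sigma>\<^sup>j\<close> on \<open>K\<close>. Applying \<open>G\<close> to \<open>t c = \<sigma>(c) t\<close> forces \<open>G(t) = k t\<close>, so \<open>G(t\<^sup>i) = (k t)\<^sup>i\<close> and,
  from \<open>t\<^sup>m\<^sup>-\<^sup>1 t = d\<close>, \<open>\<tau>(d) = N(k) d\<close>. As \<open>N(k) \<in> F\<close> is fixed by \<open>\<tau>\<close>, we get \<open>d = \<tau>\<^sup>m(d) = N(k)\<^sup>m d\<close>;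
  without non-trivial \<open>m\<close>-th roots of unity in \<open>F\<close> this gives \<open>N(k) = 1\<close>, so \<open>\<tau>\<close> fixes \<open>F\<close> and \<open>d\<close>,
  i.e. \<open>\<tau> = id\<close>, and \<open>G\<close> is the map \<open>a t\<^sup>i \<mapsto> a (k t)\<^sup>i\<close>. Conversely every such map with \<open>N(k) = 1\<close>
  is an automorphism, \<open>G \<mapsto> k\<close> is multiplicative, and by Hilbert 90 \<open>k = \<sigma>(c)/c\<close>, which makes \<open>G\<close>
  conjugation by \<open>c\<close>.\<close>

section \<open>Field automorphisms\<close>

lemma field_aut_simps:
  assumes "field_aut f"
  shows "f (x + y) = f x + f y" "f (x * y) = f x * f y" "f 0 = 0" "f 1 = 1"
    "f (- x) = - f x" "f (x - y) = f x - f y" "f (inverse x) = inverse (f x)"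
    "f x = f y \<longleftrightarrow> x = y"
proof -
  show add: "f (x + y) = f x + f y" and mult: "f (x * y) = f x * f y" for x y
    using assms by (auto simp: field_aut_def)
  have inj: "inj f" using assms by (auto simp: field_aut_def bij_def)
  then show "f x = f y \<longleftrightarrow> x = y" for x y by (auto dest: injD)
  show zero: "f 0 = 0" using add[of 0 0] by (metis add_left_cancel add.right_neutral)
  have "f 1 \<noteq> 0" using inj zero by (metis injD zero_neq_one)
  then show one: "f 1 = 1" using mult[of 1 1] by simp
  show uminus: "f (- x) = - f x" for x using add[of x "- x"] zero by (simp add: eq_neg_iff_add_eq_0 add.commute)
  show "f (x - y) = f x - f y" using add[of x "- y"] uminus[of y] by simp
  show "f (inverse x) = inverse (f x)"
  proof (cases "x = 0")
    case False
    then have "f x * f (inverse x) = 1" using mult[of x "inverse x"] one by simp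
    then show ?thesis by (metis inverse_unique)
  qed (simp add: zero)
qed

lemma field_aut_funpow:
  assumes "field_aut f" shows "field_aut (f ^^ n)"
proof -
  have "bij (f ^^ n)" using assms bij_betw_funpow[of f UNIV n] by (simp add: field_aut_def)
  moreover have "(f ^^ n) (x + y) = (f ^^ n) x + (f ^^ n) y \<and> (f ^^ n) (x * y) = (f ^^ n) x * (f ^^ n) y" for x y
    by (induction n) (simp_all add: field_aut_simps[OF assms])
  ultimately show ?thesis by (simp add: field_aut_def)
qed

lemma field_aut_sum: "field_aut f \<Longrightarrow> f (sum g S) = (\<Sum>i\<in>S. f (g i))"
  by (induction S rule: infinite_finite_induct) (auto simp: field_aut_simps)

lemma field_aut_power: "field_aut f \<Longrightarrow> f (x ^ r) = f x ^ r"
  by (induction r) (simp_all add: field_aut_simps)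

lemma is_subfield_fixed_points: "field_aut \<tau> \<Longrightarrow> is_subfield {x. \<tau> x = x}"
  by (auto simp: is_subfield_def field_aut_simps)

lemma field_aut_eq_id_if_fixes_generator:
  assumes "field_aut \<tau>" and "\<forall>a\<in>F. \<tau> a = a" and "\<tau> d = d"
    and "\<forall>L. is_subfield L \<and> F \<subseteq> L \<and> d \<in> L \<longrightarrow> L = UNIV"
  shows "\<tau> = id"
proof -
  have "{x. \<tau> x = x} = UNIV"
    using assms is_subfield_fixed_points[OF assms(1)] by blast
  then show ?thesis by (auto simp: fun_eq_iff)
qed

lemma dedekind_independence:
  fixes f :: "nat \<Rightarrow> 'k::field \<Rightarrow> 'k"
  assumes mult: "\<And>i x y. f i (x * y) = f i x * f i y" and one: "\<And>i. f i 1 = 1"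
  shows "finite I \<Longrightarrow> inj_on f I \<Longrightarrow> \<forall>a. (\<Sum>i\<in>I. w i * f i a) = 0 \<Longrightarrow> \<forall>i\<in>I. w i = 0"
proof (induction I arbitrary: w rule: finite_induct)
  case (insert j I)
  have wI: "w i = 0" if iI: "i \<in> I" for i
  proof -
    have "f i \<noteq> f j" using insert.prems(1) iI insert.hyps(2) by (metis inj_on_contraD insertCI)
    then obtain y where y: "f j y \<noteq> f i y" by (metis ext)
    define w' where "w' l = w l * (f l y - f j y)" for l
    \<comment> \<open>Artin's trick: subtract the relation at \<open>a\<close> scaled by \<open>f j y\<close> from the relation at \<open>y * a\<close>.\<close>
    have "\<forall>a. (\<Sum>l\<in>I. w' l * f l a) = 0"
    proof
      fix a
      have "(\<Sum>l\<in>insert j I. w' l * f l a)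
          = (\<Sum>l\<in>insert j I. w l * f l (y * a)) - f j y * (\<Sum>l\<in>insert j I. w l * f l a)"
        by (simp add: sum_subtractf[symmetric] sum_distrib_left w'_def mult algebra_simps)
      also have "\<dots> = 0" using insert.prems(2) by simp
      finally show "(\<Sum>l\<in>I. w' l * f l a) = 0" using insert.hyps by (simp add: w'_def)
    qed
    with insert.IH[of w'] insert.prems(1) iI have "w' i = 0" by auto
    then show ?thesis using y by (simp add: w'_def)
  qed
  have "(\<Sum>i\<in>insert j I. w i * f i 1) = 0" using insert.prems(2) by blast
  then have "w j = 0" using insert.hyps wI by (simp add: one)
  then show ?case using wI by auto
qed simp

section \<open>Multiplication in \<open>(K/F,\<sigma>,d)\<close>\<close>

definition tmonom :: "'k::zero \<Rightarrow> nat \<Rightarrow> nat \<Rightarrow> 'k" where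
  "tmonom a i = (\<lambda>n. if n = i then a else 0)"

lemma cconst_eq_tmonom: "cconst a = tmonom a 0"
  by (simp add: cconst_def tmonom_def)

lemma cconst_inj: "cconst a = cconst b \<Longrightarrow> a = b"
  by (metis cconst_def)

locale nonassoc_cyclic =
  fixes \<sigma> :: "'k::field \<Rightarrow> 'k" and m :: nat and d :: 'k
  assumes field_aut_\<sigma>: "field_aut \<sigma>" and m_pos: "0 < m" and \<sigma>_pow_m: "\<sigma> ^^ m = id"
begin

abbreviation C :: "(nat \<Rightarrow> 'k) set" where "C \<equiv> cyc_carrier m"

lemmas \<sigma>_simps = field_aut_simps[OF field_aut_\<sigma>]
lemmas \<sigma>_pow_simps = field_aut_simps[OF field_aut_funpow[OF field_aut_\<sigma>]]

lemma mem_C: "x \<in> C \<longleftrightarrow> (\<forall>i\<ge>m. x i = 0)"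
  by (simp add: cyc_carrier_def)

lemma tmonom_in_C: "i < m \<Longrightarrow> tmonom a i \<in> C"
  by (auto simp: mem_C tmonom_def)

lemma cconst_in_C: "cconst a \<in> C"
  using tmonom_in_C[OF m_pos] by (simp add: cconst_eq_tmonom)

text \<open>The multiplication of \<open>(K/F,\<sigma>,d)\<close> in closed form: modulo \<open>t\<^sup>m - d\<close> we have
  \<open>c t\<^sup>n\<^sup>+\<^sup>m \<equiv> c t\<^sup>n d = c \<sigma>\<^sup>n(d) t\<^sup>n\<close>.\<close>
definition cmul :: "(nat \<Rightarrow> 'k) \<Rightarrow> (nat \<Rightarrow> 'k) \<Rightarrow> nat \<Rightarrow> 'k" where
  "cmul g h = (\<lambda>n. if n < m then tmult \<sigma> g h n + tmult \<sigma> g h (n + m) * (\<sigma> ^^ n) d else 0)"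

lemma cmul_in_C: "cmul g h \<in> C"
  by (simp add: mem_C cmul_def)

lemma tmult_vanishes_high:
  assumes "g \<in> C" "h \<in> C" "2 * m \<le> n" shows "tmult \<sigma> g h n = 0"
  unfolding tmult_def
proof (rule sum.neutral, rule ballI)
  fix i assume "i \<in> {..n}"
  show "g i * (\<sigma> ^^ i) (h (n - i)) = 0"
    using assms by (cases "i < m") (auto simp: mem_C \<sigma>_pow_simps)
qed

lemma tmult_tm_minus_d:
  "tmult \<sigma> q (tm_minus_d m d) n = (if m \<le> n then q (n - m) else 0) - q n * (\<sigma> ^^ n) d"
proof -
  have "tmult \<sigma> q (tm_minus_d m d) n
      = (\<Sum>i\<le>n. (if m \<le> n \<and> i = n - m then q i else 0) - (if i = n then q i * (\<sigma> ^^ i) d else 0))"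
    unfolding tmult_def tm_minus_d_def
    by (rule sum.cong) (auto simp: \<sigma>_pow_simps right_diff_distrib)
  also have "\<dots> = (if m \<le> n then q (n - m) else 0) - q n * (\<sigma> ^^ n) d"
    by (cases "m \<le> n") (simp_all add: sum_subtractf sum_negf)
  finally show ?thesis .
qed

lemma division_quotient_unique:
  assumes g: "g \<in> C" and h: "h \<in> C" and q: "q \<in> tpolys" and r: "r \<in> C"
    and eq: "\<And>n. tmult \<sigma> g h n = tmult \<sigma> q (tm_minus_d m d) n + r n"
  shows "q s = tmult \<sigma> g h (s + m)"
proof (rule ccontr)
  let ?c = "tmult \<sigma> g h"
  define D where "D = {s. q s \<noteq> ?c (s + m)}"
  assume "q s \<noteq> ?c (s + m)"
  then have "D \<noteq> {}" by (auto simp: D_def)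
  have "D \<subseteq> {s. q s \<noteq> 0} \<union> {..<m}"
    using tmult_vanishes_high[OF g h] by (auto simp: D_def not_less)
  moreover have "finite ({s. q s \<noteq> 0} \<union> {..<m})" using q by (simp add: tpolys_def)
  ultimately have "finite D" by (rule finite_subset)
  define s0 where "s0 = Max D"
  have "s0 \<in> D" using \<open>finite D\<close> \<open>D \<noteq> {}\<close> by (simp add: s0_def)
  have "s0 + m \<notin> D" using Max_ge[OF \<open>finite D\<close>, of "s0 + m"] m_pos by (auto simp: s0_def)
  then have "q (s0 + m) = 0"
    using tmult_vanishes_high[OF g h, of "s0 + m + m"] by (simp add: D_def)
  then have "?c (s0 + m) = q s0"
    using eq[of "s0 + m"] r by (simp add: tmult_tm_minus_d mem_C)
  then show False using \<open>s0 \<in> D\<close> by (simp add: D_def)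
qed

lemma cyc_mult_eq_cmul:
  assumes g: "g \<in> C" and h: "h \<in> C" shows "cyc_mult \<sigma> m d g h = cmul g h"
  unfolding cyc_mult_def
proof (rule the_equality)
  let ?c = "tmult \<sigma> g h"
  define q where "q s = ?c (s + m)" for s
  have "q s = 0" if "m \<le> s" for s
    using tmult_vanishes_high[OF g h, of "s + m"] that by (simp add: q_def)
  then have "{s. q s \<noteq> 0} \<subseteq> {..<m}" by (metis (mono_tags) lessThan_iff linorder_not_le mem_Collect_eq subsetI)
  then have "finite {s. q s \<noteq> 0}" by (rule finite_subset) simp
  then have "q \<in> tpolys" by (simp add: tpolys_def)
  moreover have "?c n = tmult \<sigma> q (tm_minus_d m d) n + cmul g h n" for n
  proof (cases "n < m")
    case True then show ?thesis by (simp add: tmult_tm_minus_d cmul_def q_def)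
  next
    case False then show ?thesis
      using tmult_vanishes_high[OF g h, of "n + m"] by (simp add: tmult_tm_minus_d cmul_def q_def)
  qed
  ultimately show "cmul g h \<in> C \<and> (\<exists>q\<in>tpolys. ?c = (\<lambda>n. tmult \<sigma> q (tm_minus_d m d) n + cmul g h n))"
    using cmul_in_C by (auto simp: fun_eq_iff)
next
  fix r assume "r \<in> C \<and> (\<exists>q\<in>tpolys. tmult \<sigma> g h = (\<lambda>n. tmult \<sigma> q (tm_minus_d m d) n + r n))"
  then obtain q where r: "r \<in> C" and q: "q \<in> tpolys"
    and eq: "\<And>n. tmult \<sigma> g h n = tmult \<sigma> q (tm_minus_d m d) n + r n"
    by (auto simp: fun_eq_iff)
  note quot = division_quotient_unique[OF g h q r eq]
  show "r = cmul g h"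
  proof
    fix n show "r n = cmul g h n"
      using eq[of n] r by (cases "n < m") (auto simp: tmult_tm_minus_d cmul_def quot mem_C algebra_simps)
  qed
qed

lemma cmul_cconst_left: "h \<in> C \<Longrightarrow> cmul (cconst a) h = (\<lambda>n. a * h n)"
proof -
  have "tmult \<sigma> (cconst a) h n = (\<Sum>i\<le>n. if i = 0 then a * h n else 0)" for n
    unfolding tmult_def cconst_def by (rule sum.cong) auto
  then show "h \<in> C \<Longrightarrow> ?thesis" by (auto simp: cmul_def mem_C fun_eq_iff)
qed

lemma cmul_smult_left: "cmul (\<lambda>n. a * g n) h = (\<lambda>n. a * cmul g h n)"
  by (simp add: cmul_def tmult_def sum_distrib_left algebra_simps fun_eq_iff)

lemma tmult_tmonom_right:
  "tmult \<sigma> x (tmonom b j) n = (if j \<le> n then x (n - j) * (\<sigma> ^^ (n - j)) b else 0)"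
proof -
  have "tmult \<sigma> x (tmonom b j) n
      = (\<Sum>i\<le>n. if i = n - j then (if j \<le> n then x i * (\<sigma> ^^ i) b else 0) else 0)"
    unfolding tmult_def tmonom_def by (rule sum.cong) (auto simp: \<sigma>_pow_simps)
  then show ?thesis by simp
qed

lemma cmul_tmonom_right:
  assumes x: "x \<in> C" and j: "j < m"
  shows "cmul x (tmonom b j) n = (if n < m then (if j \<le> n then x (n - j) * (\<sigma> ^^ (n - j)) b
            else x (n + m - j) * (\<sigma> ^^ (n + m - j)) b * (\<sigma> ^^ n) d) else 0)"
  using x j by (auto simp: cmul_def tmult_tmonom_right mem_C)

lemma cmul_tmonom:
  assumes ij: "i < m" "j < m"
  shows "cmul (tmonom a i) (tmonom b j) = (if i + j < m then tmonom (a * (\<sigma> ^^ i) b) (i + j)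
     else tmonom (a * (\<sigma> ^^ i) b * (\<sigma> ^^ (i + j - m)) d) (i + j - m))"
proof
  fix n
  note R = cmul_tmonom_right[OF tmonom_in_C[OF ij(1)] ij(2)]
  consider "n < m" "j \<le> n" | "n < m" "\<not> j \<le> n" | "\<not> n < m" by blast
  then show "cmul (tmonom a i) (tmonom b j) n = (if i + j < m then tmonom (a * (\<sigma> ^^ i) b) (i + j)
     else tmonom (a * (\<sigma> ^^ i) b * (\<sigma> ^^ (i + j - m)) d) (i + j - m)) n"
  proof cases
    case 1
    then have "n - j = i \<longleftrightarrow> n = i + j" "\<not> i + j < m \<Longrightarrow> n \<noteq> i + j - m" using ij by arith+
    with 1 show ?thesis by (simp only: R) (simp add: tmonom_def)
  next
    case 2
    then have "n + m - j = i \<longleftrightarrow> n = i + j - m \<and> \<not> i + j < m" "n \<noteq> i + j" using ij by arith+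
    with 2 show ?thesis by (simp only: R) (simp add: tmonom_def)
  next
    case 3
    then have "i + j < m \<longrightarrow> n \<noteq> i + j" "n \<noteq> i + j - m" using ij by arith+
    with 3 show ?thesis by (simp only: R) (simp add: tmonom_def)
  qed
qed

lemma cmul_one_left: "x \<in> C \<Longrightarrow> cmul (cconst 1) x = x"
  by (simp add: cmul_cconst_left)

lemma cmul_one_right: "x \<in> C \<Longrightarrow> cmul x (cconst 1) = x"
  by (auto simp: fun_eq_iff cconst_eq_tmonom cmul_tmonom_right[OF _ m_pos] \<sigma>_pow_simps mem_C)

lemma cmul_cconst_tmonom: "i < m \<Longrightarrow> cmul (cconst a) (tmonom b i) = tmonom (a * b) i"
  unfolding cmul_cconst_left[OF tmonom_in_C] by (simp add: fun_eq_iff tmonom_def)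

lemma cmul_cconst_cconst: "cmul (cconst a) (cconst b) = cconst (a * b)"
  unfolding cmul_cconst_left[OF cconst_in_C] by (simp add: fun_eq_iff cconst_def)

section \<open>The maps \<open>t \<mapsto> k t\<close>\<close>

text \<open>\<open>partial_norm k n = k \<sigma>(k) \<cdots> \<sigma>\<^sup>n\<^sup>-\<^sup>1(k)\<close>, so that \<open>(k t)\<^sup>n = partial_norm k n t\<^sup>n\<close>.\<close>
definition partial_norm :: "'k \<Rightarrow> nat \<Rightarrow> 'k" where
  "partial_norm k n = (\<Prod>l<n. (\<sigma> ^^ l) k)"

lemma partial_norm_0 [simp]: "partial_norm k 0 = 1"
  by (simp add: partial_norm_def)

lemma partial_norm_Suc: "partial_norm k (Suc n) = partial_norm k n * (\<sigma> ^^ n) k"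
  by (simp add: partial_norm_def)

lemma partial_norm_1 [simp]: "partial_norm k (Suc 0) = k"
  by (simp add: partial_norm_def)

lemma partial_norm_m: "partial_norm k m = normKF \<sigma> m k"
  by (simp add: partial_norm_def normKF_def)

lemma partial_norm_add: "partial_norm k (i + j) = partial_norm k i * (\<sigma> ^^ i) (partial_norm k j)"
proof (induction j)
  case (Suc j)
  then show ?case by (simp add: partial_norm_Suc \<sigma>_pow_simps funpow_add)
qed (simp add: \<sigma>_pow_simps)

lemma partial_norm_mult: "partial_norm (k * l) n = partial_norm k n * partial_norm l n"
  by (simp add: partial_norm_def \<sigma>_pow_simps prod.distrib)

lemma partial_norm_periodic: "normKF \<sigma> m k = 1 \<Longrightarrow> partial_norm k (n + m) = partial_norm k n"
  using partial_norm_add[of k n m] by (simp add: partial_norm_m \<sigma>_pow_simps)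

lemma partial_norm_nonzero: "k \<noteq> 0 \<Longrightarrow> partial_norm k n \<noteq> 0"
  by (simp add: partial_norm_def \<sigma>_pow_simps(8)[of _ _ 0, unfolded \<sigma>_pow_simps(3)])

lemma normKF_nonzero: "normKF \<sigma> m k \<noteq> 0 \<Longrightarrow> k \<noteq> 0"
  using m_pos by (auto simp: normKF_def \<sigma>_pow_simps intro: bexI[of _ 0])

lemma cmul_partial_norm:
  assumes "normKF \<sigma> m k = 1"
  shows "cmul (\<lambda>n. x n * partial_norm k n) (\<lambda>n. y n * partial_norm k n)
       = (\<lambda>n. cmul x y n * partial_norm k n)"
proof -
  have "tmult \<sigma> (\<lambda>n. x n * partial_norm k n) (\<lambda>n. y n * partial_norm k n) n
      = partial_norm k n * tmult \<sigma> x y n" for n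
    unfolding tmult_def sum_distrib_left
  proof (rule sum.cong[OF refl])
    fix i assume "i \<in> {..n}"
    then have "partial_norm k n = partial_norm k i * (\<sigma> ^^ i) (partial_norm k (n - i))"
      using partial_norm_add[of k i "n - i"] by simp
    then show "x i * partial_norm k i * (\<sigma> ^^ i) (y (n - i) * partial_norm k (n - i))
        = partial_norm k n * (x i * (\<sigma> ^^ i) (y (n - i)))"
      by (simp add: \<sigma>_pow_simps)
  qed
  then show ?thesis
    by (simp add: cmul_def partial_norm_periodic[OF assms] algebra_simps fun_eq_iff)
qed

text \<open>\<open>a t\<^sup>i \<mapsto> a (k t)\<^sup>i\<close>; an automorphism when \<open>N(k) = 1\<close>.\<close>
definition diag_aut :: "'k \<Rightarrow> (nat \<Rightarrow> 'k) \<Rightarrow> nat \<Rightarrow> 'k" where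
  "diag_aut k = (\<lambda>x\<in>C. \<lambda>n. x n * partial_norm k n)"

lemma diag_aut_apply: "x \<in> C \<Longrightarrow> diag_aut k x = (\<lambda>n. x n * partial_norm k n)"
  by (simp add: diag_aut_def)

lemma diag_aut_in_C: "x \<in> C \<Longrightarrow> diag_aut k x \<in> C"
  by (simp add: diag_aut_apply mem_C)

lemma diag_aut_compose:
  "compose C (diag_aut k) (diag_aut l) = diag_aut (k * l)"
  by (auto simp: compose_def diag_aut_def diag_aut_in_C mem_C partial_norm_mult fun_eq_iff)

lemma diag_aut_mem_AutF:
  assumes N: "normKF \<sigma> m k = 1" shows "diag_aut k \<in> cyc_AutF F \<sigma> m d"
proof -
  have P: "partial_norm k n \<noteq> 0" for n
    using N by (simp add: normKF_nonzero partial_norm_nonzero)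
  have "bij_betw (diag_aut k) C C"
    by (rule bij_betwI[where g="\<lambda>y\<in>C. \<lambda>n. y n / partial_norm k n"])
      (auto simp: diag_aut_def mem_C P)
  moreover have "cyc_mult \<sigma> m d (diag_aut k x) (diag_aut k y) = diag_aut k (cyc_mult \<sigma> m d x y)"
    if "x \<in> C" "y \<in> C" for x y
    using that
    by (simp add: cyc_mult_eq_cmul diag_aut_in_C cmul_in_C)
      (simp add: diag_aut_apply cmul_in_C cmul_partial_norm[OF N])
  ultimately show ?thesis
    by (auto simp: cyc_AutF_def diag_aut_def mem_C algebra_simps fun_eq_iff)
qed

lemma diag_aut_inner:
  assumes c: "c \<noteq> 0" "\<sigma> c = k * c" shows "cyc_inner \<sigma> m d (diag_aut k)"
proof -
  have "partial_norm k n * c = (\<sigma> ^^ n) c" for n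
  proof (induction n)
    case (Suc n)
    have "partial_norm k (Suc n) * c = (\<sigma> ^^ n) k * (partial_norm k n * c)"
      by (simp add: partial_norm_Suc algebra_simps)
    also have "\<dots> = (\<sigma> ^^ Suc n) c" using Suc c(2) by (simp add: \<sigma>_pow_simps funpow_swap1)
    finally show ?case .
  qed simp
  then have P: "partial_norm k n = inverse c * (\<sigma> ^^ n) c" for n
    using c(1) by (simp add: field_simps)
  have "diag_aut k x = cmul (cmul (cconst (inverse c)) x) (cconst c)" if x: "x \<in> C" for x
  proof -
    have "(\<lambda>n. inverse c * x n) \<in> C" using x by (simp add: mem_C)
    then show ?thesis
      unfolding cmul_cconst_left[OF x] unfolding cconst_eq_tmonom
      using x by (auto simp: fun_eq_iff cmul_tmonom_right[OF _ m_pos] diag_aut_apply P mem_C)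
  qed
  moreover have "cmul (cconst (inverse c)) (cconst c) = cconst 1"
    using c(1) by (simp add: cmul_cconst_cconst)
  ultimately show ?thesis
    unfolding cyc_inner_def
    by (intro bexI[of _ "cconst c"] bexI[of _ "cconst (inverse c)"])
      (simp_all add: cyc_mult_eq_cmul cconst_in_C cmul_in_C)
qed

section \<open>Automorphisms of \<open>(K/F,\<sigma>,d)\<close>\<close>

definition left_nucleus :: "(nat \<Rightarrow> 'k) set" where
  "left_nucleus = {x\<in>C. \<forall>y\<in>C. \<forall>z\<in>C. cmul (cmul x y) z = cmul x (cmul y z)}"

lemma cconst_in_left_nucleus: "cconst a \<in> left_nucleus"
  by (simp add: left_nucleus_def cconst_in_C cmul_cconst_left cmul_smult_left cmul_in_C)

text \<open>If \<open>x\<close> associates with \<open>t\<^sup>m\<^sup>-\<^sup>n\<close> and \<open>t\<^sup>n\<close>, then \<open>x\<^sub>n d = x\<^sub>n \<sigma>\<^sup>n(d)\<close>.\<close>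
lemma left_nucleus_eq_cconst:
  assumes d: "\<And>i. 0 < i \<Longrightarrow> i < m \<Longrightarrow> (\<sigma> ^^ i) d \<noteq> d" and x: "x \<in> left_nucleus"
  shows "x = cconst (x 0)"
proof
  fix n
  have xC: "x \<in> C" using x by (simp add: left_nucleus_def)
  show "x n = cconst (x 0) n"
  proof (cases "0 < n \<and> n < m")
    case True
    then have j: "m - n < m" and n: "n < m" by auto
    have "cmul (tmonom 1 (m - n)) (tmonom 1 n) = cconst d"
      using True by (simp add: cmul_tmonom \<sigma>_pow_simps cconst_eq_tmonom)
    then have assoc: "cmul (cmul x (tmonom 1 (m - n))) (tmonom 1 n) = cmul x (cconst d)"
      using x tmonom_in_C[OF j] tmonom_in_C[OF n] unfolding left_nucleus_def by force
    have "cmul (cmul x (tmonom 1 (m - n))) (tmonom 1 n) n = x n * d"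
      using True by (simp add: cmul_tmonom_right[OF cmul_in_C n] cmul_tmonom_right[OF xC j] \<sigma>_pow_simps)
    moreover have "cmul x (cconst d) n = x n * (\<sigma> ^^ n) d"
      using True by (simp add: cconst_eq_tmonom cmul_tmonom_right[OF xC m_pos])
    ultimately have "x n * d = x n * (\<sigma> ^^ n) d" using assoc by metis
    then have "x n = 0" using d[of n] True by auto
    then show ?thesis using True by (simp add: cconst_def)
  qed (use xC in \<open>auto simp: cconst_def mem_C\<close>)
qed

context
  fixes F :: "'k set" and G :: "(nat \<Rightarrow> 'k) \<Rightarrow> nat \<Rightarrow> 'k"
  assumes G: "G \<in> cyc_AutF F \<sigma> m d"
begin

lemma aut_bij: "bij_betw G C C"
  using G by (simp add: cyc_AutF_def)

lemma aut_in_C: "x \<in> C \<Longrightarrow> G x \<in> C"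
  using aut_bij bij_betwE by blast

lemma aut_inj: "x \<in> C \<Longrightarrow> y \<in> C \<Longrightarrow> G x = G y \<Longrightarrow> x = y"
  using aut_bij by (meson bij_betw_imp_inj_on inj_onD)

lemma aut_surj: "y \<in> C \<Longrightarrow> \<exists>x\<in>C. G x = y"
  using aut_bij by (metis bij_betw_imp_surj_on imageE)

lemma aut_add: "x \<in> C \<Longrightarrow> y \<in> C \<Longrightarrow> G (\<lambda>i. x i + y i) = (\<lambda>i. G x i + G y i)"
  using G by (simp add: cyc_AutF_def)

lemma aut_smult: "c \<in> F \<Longrightarrow> x \<in> C \<Longrightarrow> G (\<lambda>i. c * x i) = (\<lambda>i. c * G x i)"
  using G by (simp add: cyc_AutF_def)

lemma aut_cmul: "x \<in> C \<Longrightarrow> y \<in> C \<Longrightarrow> G (cmul x y) = cmul (G x) (G y)"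
  using G by (simp add: cyc_AutF_def cyc_mult_eq_cmul aut_in_C cmul_in_C)

lemma aut_one: "G (cconst 1) = cconst 1"
proof -
  obtain x where x: "x \<in> C" "G x = cconst 1" using aut_surj[OF cconst_in_C] by blast
  have "G (cconst 1) = cmul (G (cconst 1)) (G x)"
    using x by (simp add: cmul_one_right aut_in_C cconst_in_C)
  also have "\<dots> = G (cmul (cconst 1) x)" using x by (simp add: aut_cmul cconst_in_C)
  finally show ?thesis using x by (simp add: cmul_one_left)
qed

lemma aut_left_nucleus_iff:
  assumes x: "x \<in> C" shows "G x \<in> left_nucleus \<longleftrightarrow> x \<in> left_nucleus"
proof
  assume N: "G x \<in> left_nucleus"
  have "cmul (cmul x y) z = cmul x (cmul y z)" if "y \<in> C" "z \<in> C" for y z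
  proof (rule aut_inj)
    have "G (cmul (cmul x y) z) = cmul (cmul (G x) (G y)) (G z)"
      using x that by (simp add: aut_cmul cmul_in_C)
    also have "\<dots> = cmul (G x) (cmul (G y) (G z))"
      using N that aut_in_C unfolding left_nucleus_def by blast
    also have "\<dots> = G (cmul x (cmul y z))" using x that by (simp add: aut_cmul cmul_in_C)
    finally show "G (cmul (cmul x y) z) = G (cmul x (cmul y z))" .
  qed (rule cmul_in_C)+
  then show "x \<in> left_nucleus" using x unfolding left_nucleus_def by blast
next
  assume N: "x \<in> left_nucleus"
  have "cmul (cmul (G x) (G y)) (G z) = cmul (G x) (cmul (G y) (G z))" if "y \<in> C" "z \<in> C" for y z
    using N x that by (simp add: aut_cmul[symmetric] cmul_in_C left_nucleus_def)
  then have "cmul (cmul (G x) y) z = cmul (G x) (cmul y z)" if "y \<in> C" "z \<in> C" for y z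
    using aut_surj[OF that(1)] aut_surj[OF that(2)] by blast
  then show "G x \<in> left_nucleus" using aut_in_C[OF x] unfolding left_nucleus_def by blast
qed

end

lemma eq_diag_aut_if_on_monomials:
  assumes ext: "G \<in> extensional C"
    and add: "\<And>x y. x \<in> C \<Longrightarrow> y \<in> C \<Longrightarrow> G (\<lambda>i. x i + y i) = (\<lambda>i. G x i + G y i)"
    and mon: "\<And>a i. i < m \<Longrightarrow> G (tmonom a i) = tmonom (a * partial_norm k i) i"
  shows "G = diag_aut k"
proof (rule extensionalityI[OF ext])
  define trunc where "trunc x j = (\<lambda>n. if n < j then x n else 0)" for x :: "nat \<Rightarrow> 'k" and j
  have trunc_in_C: "trunc x j \<in> C" if "j \<le> m" for x j using that by (simp add: trunc_def mem_C)
  have G_trunc: "G (trunc x j) = (\<lambda>n. trunc x j n * partial_norm k n)" if "j \<le> m" for x j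
    using that
  proof (induction j)
    case 0
    have "trunc x 0 = tmonom 0 0" by (simp add: trunc_def tmonom_def fun_eq_iff)
    then show ?case using mon[OF m_pos, of 0] by (simp add: trunc_def tmonom_def fun_eq_iff)
  next
    case (Suc j)
    then have j: "j < m" "j \<le> m" by auto
    have "trunc x (Suc j) = (\<lambda>i. trunc x j i + tmonom (x j) j i)"
      by (auto simp: trunc_def tmonom_def fun_eq_iff)
    then have "G (trunc x (Suc j)) = (\<lambda>i. G (trunc x j) i + G (tmonom (x j) j) i)"
      using add[OF trunc_in_C[OF j(2)] tmonom_in_C[OF j(1)]] by simp
    also have "\<dots> = (\<lambda>n. trunc x (Suc j) n * partial_norm k n)"
      unfolding Suc.IH[OF j(2)] mon[OF j(1)] by (auto simp: trunc_def tmonom_def fun_eq_iff)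
    finally show ?case .
  qed
  show "G x = diag_aut k x" if x: "x \<in> C" for x
  proof -
    have "trunc x m = x" using x by (auto simp: trunc_def mem_C fun_eq_iff)
    then show ?thesis using G_trunc[of m x] x by (simp add: diag_aut_apply)
  qed
qed (simp add: diag_aut_def)

definition t_coeff :: "((nat \<Rightarrow> 'k) \<Rightarrow> nat \<Rightarrow> 'k) \<Rightarrow> 'k" where
  "t_coeff G = G (tmonom 1 1) 1"

lemma t_coeff_diag_aut: "1 < m \<Longrightarrow> t_coeff (diag_aut k) = k"
  using diag_aut_apply[OF tmonom_in_C] by (simp add: t_coeff_def tmonom_def)

end

locale nonassoc_cyclic_galois = nonassoc_cyclic \<sigma> m d for \<sigma> :: "'k::field \<Rightarrow> 'k" and m d +
  fixes F :: "'k set"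
  assumes \<sigma>_Gal: "\<sigma> \<in> Gal F"
    and \<sigma>_pow_ne_id: "\<forall>i. 0 < i \<and> i < m \<longrightarrow> \<sigma> ^^ i \<noteq> id"
    and Gal_cyclic: "Gal F = {\<sigma> ^^ i | i. i < m}"
    and fixed_field_Gal: "fixed_field (Gal F) = F"
    and no_roots_of_unity: "\<forall>x\<in>F. x ^ m = 1 \<longrightarrow> x = 1"
    and one_less_m: "1 < m"
    and d_nonzero: "d \<noteq> 0"
    and d_generates: "\<forall>L. is_subfield L \<and> F \<subseteq> L \<and> d \<in> L \<longrightarrow> L = UNIV"
begin

lemma \<sigma>_pow_fixes_F: "a \<in> F \<Longrightarrow> (\<sigma> ^^ i) a = a"
  using \<sigma>_Gal by (induction i) (simp_all add: Gal_def)

lemma \<sigma>_pow_inj_on: "inj_on (\<lambda>i. \<sigma> ^^ i) {..<m}"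
proof -
  have "i = j" if ij: "i < j" "j < m" "\<sigma> ^^ i = \<sigma> ^^ j" for i j
  proof -
    have "(\<sigma> ^^ (j - i)) ((\<sigma> ^^ i) x) = (\<sigma> ^^ i) x" for x
      using ij by (metis funpow_add le_add_diff_inverse2 less_imp_le_nat o_apply)
    moreover have "surj (\<sigma> ^^ i)"
      using field_aut_funpow[OF field_aut_\<sigma>] by (simp add: field_aut_def bij_def)
    ultimately have "\<sigma> ^^ (j - i) = id" by (metis surjD eq_id_iff)
    then show ?thesis using \<sigma>_pow_ne_id ij by auto
  qed
  then show ?thesis by (metis inj_onI linorder_neqE_nat lessThan_iff)
qed

lemma \<sigma>_pow_moves_d: "0 < i \<Longrightarrow> i < m \<Longrightarrow> (\<sigma> ^^ i) d \<noteq> d"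
  using field_aut_eq_id_if_fixes_generator[OF field_aut_funpow[OF field_aut_\<sigma>] _ _ d_generates]
    \<sigma>_pow_fixes_F \<sigma>_pow_ne_id by blast

lemma normKF_in_F: "normKF \<sigma> m k \<in> F"
proof -
  have "k * \<sigma> (normKF \<sigma> m k) = partial_norm k (Suc m)"
    using partial_norm_add[of k "Suc 0" m] by (simp add: partial_norm_m)
  also have "\<dots> = k * normKF \<sigma> m k" by (simp add: partial_norm_Suc partial_norm_m \<sigma>_pow_m)
  finally have "\<sigma> (normKF \<sigma> m k) = normKF \<sigma> m k \<or> k = 0" by auto
  moreover have "normKF \<sigma> m 0 = 0" using normKF_nonzero by blast
  ultimately have "\<sigma> (normKF \<sigma> m k) = normKF \<sigma> m k" by (auto simp: \<sigma>_simps)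
  then have "(\<sigma> ^^ i) (normKF \<sigma> m k) = normKF \<sigma> m k" for i by (induction i) simp_all
  then show ?thesis using fixed_field_Gal by (auto simp: Gal_cyclic fixed_field_def)
qed

lemma hilbert90:
  assumes N: "normKF \<sigma> m k = 1" shows "\<exists>c. c \<noteq> 0 \<and> \<sigma> c = k * c"
proof -
  define \<theta> where "\<theta> a = (\<Sum>i<m. partial_norm k i * (\<sigma> ^^ i) a)" for a
  have "\<exists>a. \<theta> a \<noteq> 0"
  proof (rule ccontr)
    assume "\<not> (\<exists>a. \<theta> a \<noteq> 0)"
    then have "\<forall>i\<in>{..<m}. partial_norm k i = 0"
      using dedekind_independence[of "\<lambda>i. \<sigma> ^^ i" "{..<m}" "partial_norm k"] \<sigma>_pow_inj_on
      by (simp add: \<theta>_def \<sigma>_pow_simps)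
    then show False using m_pos by (metis lessThan_iff partial_norm_0 zero_neq_one)
  qed
  then obtain a where a: "\<theta> a \<noteq> 0" by blast
  have "k * \<sigma> (\<theta> a) = (\<Sum>i<m. partial_norm k (Suc i) * (\<sigma> ^^ Suc i) a)"
    unfolding \<theta>_def field_aut_sum[OF field_aut_\<sigma>] sum_distrib_left
    using partial_norm_add[of k 1]
    by (intro sum.cong) (simp_all add: \<sigma>_simps funpow_swap1)
  also have "\<dots> = \<theta> a"
    using sum.lessThan_Suc_shift[of "\<lambda>i. partial_norm k i * (\<sigma> ^^ i) a" m] N
    by (simp add: \<theta>_def partial_norm_m \<sigma>_pow_m)
  finally have \<sigma>\<theta>: "k * \<sigma> (\<theta> a) = \<theta> a" .
  then have "\<sigma> (\<theta> a) \<noteq> 0" using a by auto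
  then have "\<sigma> (inverse (\<theta> a)) = k * inverse (\<theta> a)"
    using a \<sigma>\<theta> by (simp add: \<sigma>_simps) (simp add: field_simps)
  then show ?thesis using a by (intro exI[of _ "inverse (\<theta> a)"]) simp
qed

lemma left_nucleus_elem_eq_cconst: "x \<in> left_nucleus \<Longrightarrow> x = cconst (x 0)"
  using left_nucleus_eq_cconst \<sigma>_pow_moves_d by blast

definition restrict_K :: "((nat \<Rightarrow> 'k) \<Rightarrow> nat \<Rightarrow> 'k) \<Rightarrow> 'k \<Rightarrow> 'k" where
  "restrict_K G a = G (cconst a) 0"

context
  fixes G assumes G: "G \<in> cyc_AutF F \<sigma> m d"
begin

lemma aut_cconst: "G (cconst a) = cconst (restrict_K G a)"
  using left_nucleus_elem_eq_cconst aut_left_nucleus_iff[OF G cconst_in_C] cconst_in_left_nucleus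
  by (simp add: restrict_K_def)

lemma restrict_K_in_Gal: "restrict_K G \<in> Gal F"
proof -
  let ?\<tau> = "restrict_K G"
  have "cconst (?\<tau> (a + b)) = (\<lambda>i. cconst (?\<tau> a) i + cconst (?\<tau> b) i)" for a b
  proof -
    have "cconst (a + b) = (\<lambda>i. cconst a i + cconst b i)" by (simp add: cconst_def fun_eq_iff)
    then have "G (cconst (a + b)) = (\<lambda>i. G (cconst a) i + G (cconst b) i)"
      using aut_add[OF G cconst_in_C cconst_in_C] by simp
    then show ?thesis by (simp only: aut_cconst)
  qed
  then have "?\<tau> (a + b) = ?\<tau> a + ?\<tau> b" for a b
    using fun_cong[of _ _ 0] by (fastforce simp: cconst_def)
  moreover have "?\<tau> (a * b) = ?\<tau> a * ?\<tau> b" for a b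
    using aut_cmul[OF G cconst_in_C cconst_in_C, of a b]
    by (simp only: aut_cconst cmul_cconst_cconst) (rule cconst_inj)
  moreover have "inj ?\<tau>"
    using aut_inj[OF G cconst_in_C cconst_in_C] by (metis aut_cconst cconst_inj injI)
  moreover have "surj ?\<tau>"
  proof -
    have "b \<in> range ?\<tau>" for b
    proof -
      obtain x where x: "x \<in> C" "G x = cconst b" using aut_surj[OF G cconst_in_C] by blast
      then have "x \<in> left_nucleus"
        using aut_left_nucleus_iff[OF G x(1)] cconst_in_left_nucleus by simp
      then have "x = cconst (x 0)" by (rule left_nucleus_elem_eq_cconst)
      then show ?thesis using x(2) aut_cconst by (metis cconst_inj rangeI)
    qed
    then show ?thesis by auto
  qed
  moreover have "?\<tau> a = a" if "a \<in> F" for a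
  proof -
    have "cconst a = (\<lambda>i. a * cconst 1 i)" by (simp add: cconst_def fun_eq_iff)
    then have "G (cconst a) = cconst a"
      using aut_smult[OF G that cconst_in_C] aut_one[OF G] by simp
    then show ?thesis by (simp add: restrict_K_def cconst_def)
  qed
  ultimately show ?thesis by (simp add: Gal_def field_aut_def bij_def)
qed

lemma restrict_K_comm_\<sigma>: "restrict_K G (\<sigma> a) = \<sigma> (restrict_K G a)"
proof -
  obtain j where "restrict_K G = \<sigma> ^^ j" using restrict_K_in_Gal Gal_cyclic by auto
  then show ?thesis by (simp add: funpow_swap1)
qed

lemma aut_t: "G (tmonom 1 1) = tmonom (t_coeff G) 1"
proof
  fix n
  let ?u = "G (tmonom 1 1)"
  have uC: "?u \<in> C" using aut_in_C[OF G tmonom_in_C[OF one_less_m]] .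
  have rel: "cmul ?u (cconst c) = cmul (cconst (\<sigma> c)) ?u" for c
  proof -
    have "surj (restrict_K G)" using restrict_K_in_Gal by (simp add: Gal_def field_aut_def bij_def)
    then obtain b where b: "restrict_K G b = c" by (metis surjD)
    have "cmul (tmonom 1 1) (cconst b) = cmul (cconst (\<sigma> b)) (tmonom 1 1)"
      using one_less_m by (simp add: cconst_eq_tmonom cmul_tmonom)
    then have "G (cmul (tmonom 1 1) (cconst b)) = G (cmul (cconst (\<sigma> b)) (tmonom 1 1))" by simp
    then show ?thesis
      using tmonom_in_C[OF one_less_m] by (simp add: aut_cmul[OF G] cconst_in_C aut_cconst restrict_K_comm_\<sigma> b)
  qed
  have comm: "?u n * (\<sigma> ^^ n) c = \<sigma> c * ?u n" if "n < m" for c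
  proof -
    have "cmul ?u (cconst c) n = cmul (cconst (\<sigma> c)) ?u n" using rel by simp
    then show ?thesis
      unfolding cmul_cconst_left[OF uC] unfolding cconst_eq_tmonom cmul_tmonom_right[OF uC m_pos]
      using that by simp
  qed
  have "?u n = 0" if "n < m" "n \<noteq> 1"
  proof -
    have "?u n \<noteq> 0 \<Longrightarrow> \<sigma> ^^ n = \<sigma> ^^ 1"
      using comm[OF that(1)] by (auto simp: fun_eq_iff mult.commute)
    then show ?thesis using inj_onD[OF \<sigma>_pow_inj_on, of n 1] that one_less_m by (metis lessThan_iff)
  qed
  then show "?u n = tmonom (t_coeff G) 1 n"
    using uC by (cases "n < m") (auto simp: tmonom_def t_coeff_def mem_C)
qed

lemma aut_t_pow: "i < m \<Longrightarrow> G (tmonom 1 i) = tmonom (partial_norm (t_coeff G) i) i"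
proof (induction i)
  case 0 then show ?case using aut_one[OF G] by (simp add: cconst_eq_tmonom)
next
  case (Suc i)
  have i: "i < m" using Suc.prems by simp
  have "tmonom 1 (Suc i) = cmul (tmonom 1 i) (tmonom 1 1)"
    using Suc.prems i one_less_m by (simp add: cmul_tmonom \<sigma>_pow_simps)
  then have "G (tmonom 1 (Suc i)) = cmul (tmonom (partial_norm (t_coeff G) i) i) (tmonom (t_coeff G) 1)"
    using aut_cmul[OF G tmonom_in_C[OF i] tmonom_in_C[OF one_less_m]] Suc.IH[OF i] aut_t by simp
  also have "\<dots> = tmonom (partial_norm (t_coeff G) (Suc i)) (Suc i)"
    using Suc.prems i one_less_m by (simp add: cmul_tmonom partial_norm_Suc)
  finally show ?case .
qed

lemma restrict_K_d: "restrict_K G d = normKF \<sigma> m (t_coeff G) * d"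
proof -
  let ?k = "t_coeff G"
  have m': "m - 1 < m" "m - 1 + 1 = m" using one_less_m by auto
  have "cconst d = cmul (tmonom 1 (m - 1)) (tmonom 1 1)"
    using m' one_less_m by (simp add: cmul_tmonom cconst_eq_tmonom \<sigma>_pow_simps)
  then have "G (cconst d) = cmul (tmonom (partial_norm ?k (m - 1)) (m - 1)) (tmonom ?k 1)"
    using aut_cmul[OF G tmonom_in_C[OF m'(1)] tmonom_in_C[OF one_less_m]] aut_t_pow[OF m'(1)] aut_t by simp
  also have "\<dots> = cconst (partial_norm ?k m * d)"
    using m' one_less_m partial_norm_Suc[of ?k "m - 1"] by (simp add: cmul_tmonom cconst_eq_tmonom)
  finally show ?thesis by (simp add: aut_cconst partial_norm_m cconst_inj)
qed

lemma normKF_t_coeff: "normKF \<sigma> m (t_coeff G) = 1"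
proof -
  define c where "c = normKF \<sigma> m (t_coeff G)"
  obtain j where j: "restrict_K G = \<sigma> ^^ j" using restrict_K_in_Gal Gal_cyclic by auto
  have cF: "c \<in> F" unfolding c_def by (rule normKF_in_F)
  have "((\<sigma> ^^ j) ^^ r) d = c ^ r * d" for r
  proof (induction r)
    case (Suc r)
    have "((\<sigma> ^^ j) ^^ Suc r) d = (\<sigma> ^^ j) c ^ r * (\<sigma> ^^ j) d"
      using Suc by (simp add: \<sigma>_pow_simps field_aut_power[OF field_aut_funpow[OF field_aut_\<sigma>]])
    then show ?case using restrict_K_d j \<sigma>_pow_fixes_F[OF cF] by (simp add: c_def)
  qed simp
  moreover have "(\<sigma> ^^ j) ^^ m = id"
    by (simp add: funpow_mult mult.commute[of j m] funpow_mult[symmetric] \<sigma>_pow_m)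
  ultimately have "c ^ m * d = d" by (metis id_apply)
  then show ?thesis using d_nonzero no_roots_of_unity cF by (simp add: c_def)
qed

lemma restrict_K_eq_id: "restrict_K G a = a"
  using field_aut_eq_id_if_fixes_generator[of "restrict_K G" F d] restrict_K_in_Gal
    restrict_K_d normKF_t_coeff d_generates
  by (simp add: Gal_def)

lemma aut_eq_diag_aut: "G = diag_aut (t_coeff G)"
proof (rule eq_diag_aut_if_on_monomials)
  show "G \<in> extensional C" using G by (simp add: cyc_AutF_def)
  show "G (\<lambda>i. x i + y i) = (\<lambda>i. G x i + G y i)" if "x \<in> C" "y \<in> C" for x y
    using aut_add[OF G that] .
  show "G (tmonom a i) = tmonom (a * partial_norm (t_coeff G) i) i" if i: "i < m" for a i
  proof -
    have "G (tmonom a i) = G (cmul (cconst a) (tmonom 1 i))" using i by (simp add: cmul_cconst_tmonom)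
    also have "\<dots> = cmul (cconst a) (tmonom (partial_norm (t_coeff G) i) i)"
      using aut_cmul[OF G cconst_in_C tmonom_in_C[OF i]] aut_t_pow[OF i]
      by (simp add: aut_cconst restrict_K_eq_id)
    finally show ?thesis using i by (simp add: cmul_cconst_tmonom)
  qed
qed

lemma aut_cconst_eq: "G (cconst a) = cconst a"
  by (simp add: aut_cconst restrict_K_eq_id)

lemma aut_inner: "cyc_inner \<sigma> m d G"
proof -
  obtain c where "c \<noteq> 0" "\<sigma> c = t_coeff G * c" using hilbert90[OF normKF_t_coeff] by blast
  then show ?thesis by (subst aut_eq_diag_aut) (rule diag_aut_inner)
qed

end

lemma t_coeff_iso: "t_coeff \<in> iso (cyc_Aut_group F \<sigma> m d) (norm_kernel_group \<sigma> m)"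
proof -
  note t_coeff_diag = t_coeff_diag_aut[OF one_less_m]
  have "t_coeff (compose C G H) = t_coeff G * t_coeff H"
    if "G \<in> cyc_AutF F \<sigma> m d" "H \<in> cyc_AutF F \<sigma> m d" for G H
    using aut_eq_diag_aut[OF that(1)] aut_eq_diag_aut[OF that(2)]
    by (metis diag_aut_compose t_coeff_diag)
  then have "t_coeff \<in> hom (cyc_Aut_group F \<sigma> m d) (norm_kernel_group \<sigma> m)"
    by (intro homI) (auto simp: cyc_Aut_group_def norm_kernel_group_def normKF_t_coeff)
  moreover have "bij_betw t_coeff (cyc_AutF F \<sigma> m d) {k. normKF \<sigma> m k = 1}"
  proof (rule bij_betwI[where g = diag_aut])
    show "t_coeff \<in> cyc_AutF F \<sigma> m d \<rightarrow> {k. normKF \<sigma> m k = 1}" by (simp add: normKF_t_coeff)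
    show "diag_aut \<in> {k. normKF \<sigma> m k = 1} \<rightarrow> cyc_AutF F \<sigma> m d" by (simp add: diag_aut_mem_AutF)
  qed (simp_all add: aut_eq_diag_aut[symmetric] t_coeff_diag)
  ultimately show ?thesis
    by (intro isoI) (simp_all add: cyc_Aut_group_def norm_kernel_group_def)
qed

end

theorem theorem2p5:
  fixes F :: "'k::field set" and \<sigma> :: "'k \<Rightarrow> 'k" and m :: nat and d :: 'k
  assumes m2: "m \<ge> 2"
    and F_sub: "is_subfield F"
    and \<sigma>_gal: "\<sigma> \<in> Gal F"
    and \<sigma>_ord: "\<sigma> ^^ m = id" "\<forall>i. 0 < i \<and> i < m \<longrightarrow> \<sigma> ^^ i \<noteq> id"
    and cyclic: "Gal F = {\<sigma> ^^ i | i. i < m}"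
    and galois: "fixed_field (Gal F) = F"
    and no_roots: "\<forall>x\<in>F. x ^ m = 1 \<longrightarrow> x = 1"
    and d_nz: "d \<noteq> 0"
    and d_gen: "\<forall>L. is_subfield L \<and> F \<subseteq> L \<and> d \<in> L \<longrightarrow> L = UNIV"
  shows "(\<forall>G\<in>cyc_AutF F \<sigma> m d. \<forall>k. G (cconst k) = cconst k)
       \<and> cyc_Aut_group F \<sigma> m d \<cong> norm_kernel_group \<sigma> m
       \<and> (\<forall>G\<in>cyc_AutF F \<sigma> m d. cyc_inner \<sigma> m d G)"
proof -
  interpret nonassoc_cyclic_galois \<sigma> m d F
  proof
    show "field_aut \<sigma>" using \<sigma>_gal by (simp add: Gal_def)
  qed (use assms in auto)
  show ?thesis
    using aut_cconst_eq aut_inner is_isoI[OF t_coeff_iso] by blast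
qed

end
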